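(* Let $G$ be a torsion group and $M$ a finitely generated $\mathbb{B}[G]$-module. Then each orbit of the $G$-action on the poset of join-irreducible elements of $M$ forms an antichain; i.e. for each join-irreducible $v\in M$ and $g,h\in G$, $gv\le hv$ implies $gv=hv$.
   Context: $\mathbb{B}=\{0,1\}$ is the Boolean semifield with $1+1=1$; $\mathbb{B}[G]$ is the group semiring. A $\mathbb{B}$-module is partially ordered by $x\le y$ iff $x+y=y$ (sum is the join). An element $v$ is join-irreducible if $v\neq0$ and $v=a+b$ implies $v=a$ or $v=b$. A torsion group is one in which every element has finite order. *)

theory Defs
  imports "HOL-Algebra.Group"
begin

text \<open>A module over the group semiring B[G] (B the Boolean semifield) is a
commutative idempotent monoid (M, add, zero) -- idempotent since 1+1=1 in B --
together with an action of G by monoid endomorphisms; the action of a general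
element of B[G] (a finite subset of G) is the sum of the actions of its members.\<close>

definition BG_module ::
  "('g, 'b) monoid_scheme \<Rightarrow> 'm set \<Rightarrow> ('m \<Rightarrow> 'm \<Rightarrow> 'm) \<Rightarrow> 'm \<Rightarrow> ('g \<Rightarrow> 'm \<Rightarrow> 'm) \<Rightarrow> bool"
where
  "BG_module G M add zero act \<longleftrightarrow>
     group G \<and> zero \<in> M \<and>
     (\<forall>x\<in>M. \<forall>y\<in>M. add x y \<in> M) \<and>
     (\<forall>x\<in>M. \<forall>y\<in>M. \<forall>z\<in>M. add (add x y) z = add x (add y z)) \<and>
     (\<forall>x\<in>M. \<forall>y\<in>M. add x y = add y x) \<and>
     (\<forall>x\<in>M. add zero x = x) \<and>
     (\<forall>x\<in>M. add x x = x) \<and>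
     (\<forall>g\<in>carrier G. \<forall>x\<in>M. act g x \<in> M) \<and>
     (\<forall>x\<in>M. act \<one>\<^bsub>G\<^esub> x = x) \<and>
     (\<forall>g\<in>carrier G. \<forall>h\<in>carrier G. \<forall>x\<in>M. act (g \<otimes>\<^bsub>G\<^esub> h) x = act g (act h x)) \<and>
     (\<forall>g\<in>carrier G. \<forall>x\<in>M. \<forall>y\<in>M. act g (add x y) = add (act g x) (act g y)) \<and>
     (\<forall>g\<in>carrier G. act g zero = zero)"

inductive_set BG_span ::
  "('g, 'b) monoid_scheme \<Rightarrow> ('m \<Rightarrow> 'm \<Rightarrow> 'm) \<Rightarrow> 'm \<Rightarrow> ('g \<Rightarrow> 'm \<Rightarrow> 'm) \<Rightarrow> 'm set \<Rightarrow> 'm set"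
  for G add zero act S
where
  span_zero: "zero \<in> BG_span G add zero act S"
| span_gen: "\<lbrakk>g \<in> carrier G; s \<in> S\<rbrakk> \<Longrightarrow> act g s \<in> BG_span G add zero act S"
| span_add: "\<lbrakk>x \<in> BG_span G add zero act S; y \<in> BG_span G add zero act S\<rbrakk>
               \<Longrightarrow> add x y \<in> BG_span G add zero act S"

definition BG_fin_gen ::
  "('g, 'b) monoid_scheme \<Rightarrow> 'm set \<Rightarrow> ('m \<Rightarrow> 'm \<Rightarrow> 'm) \<Rightarrow> 'm \<Rightarrow> ('g \<Rightarrow> 'm \<Rightarrow> 'm) \<Rightarrow> bool"
where
  "BG_fin_gen G M add zero act \<longleftrightarrow>
     (\<exists>S. finite S \<and> S \<subseteq> M \<and> M \<subseteq> BG_span G add zero act S)"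

definition torsion_group :: "('g, 'b) monoid_scheme \<Rightarrow> bool" where
  "torsion_group G \<longleftrightarrow> group G \<and> (\<forall>g\<in>carrier G. \<exists>n::nat. n > 0 \<and> g [^]\<^bsub>G\<^esub> n = \<one>\<^bsub>G\<^esub>)"

definition BG_le :: "('m \<Rightarrow> 'm \<Rightarrow> 'm) \<Rightarrow> 'm \<Rightarrow> 'm \<Rightarrow> bool" where
  "BG_le add x y \<longleftrightarrow> add x y = y"

definition join_irreducible :: "'m set \<Rightarrow> ('m \<Rightarrow> 'm \<Rightarrow> 'm) \<Rightarrow> 'm \<Rightarrow> 'm \<Rightarrow> bool" where
  "join_irreducible M add zero v \<longleftrightarrow>
     v \<in> M \<and> v \<noteq> zero \<and> (\<forall>a\<in>M. \<forall>b\<in>M. v = add a b \<longrightarrow> v = a \<or> v = b)"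

end

theory Submission
  imports Defs
begin

text \<open>Put w = g^-1 h. Translating gv \<le> hv by g^-1 gives v \<le> wv, and iterating gives
v \<le> w^m v for all m. If w^n = 1 with n > 0, translating v \<le> w^(n-1) v by w gives
wv \<le> v, so wv = v and hv = gwv = gv.\<close>

lemma act_closed:
  assumes "BG_module G M add zero act" and "a \<in> carrier G" "x \<in> M"
  shows "act a x \<in> M"
  using assms unfolding BG_module_def by blast

lemma act_mult:
  assumes "BG_module G M add zero act" and "a \<in> carrier G" "b \<in> carrier G" "x \<in> M"
  shows "act (a \<otimes>\<^bsub>G\<^esub> b) x = act a (act b x)"
  using assms unfolding BG_module_def by blast

lemma act_one:
  assumes "BG_module G M add zero act" and "x \<in> M"
  shows "act \<one>\<^bsub>G\<^esub> x = x"
  using assms unfolding BG_module_def by blast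

lemma BG_le_trans:
  assumes "BG_module G M add zero act" and "x \<in> M" "y \<in> M" "z \<in> M"
    and "BG_le add x y" "BG_le add y z"
  shows "BG_le add x z"
proof -
  have "add x z = add x (add y z)" using assms(6) unfolding BG_le_def by simp
  also have "\<dots> = add (add x y) z" using assms(1-4) unfolding BG_module_def by metis
  also have "\<dots> = z" using assms(5,6) unfolding BG_le_def by simp
  finally show ?thesis unfolding BG_le_def .
qed

lemma BG_le_antisym:
  assumes "BG_module G M add zero act" and "x \<in> M" "y \<in> M"
    and "BG_le add x y" "BG_le add y x"
  shows "x = y"
  using assms unfolding BG_le_def BG_module_def by metis

lemma BG_le_act:
  assumes "BG_module G M add zero act" and "a \<in> carrier G" "x \<in> M" "y \<in> M"
    and "BG_le add x y"
  shows "BG_le add (act a x) (act a y)"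
  using assms unfolding BG_le_def BG_module_def by metis

lemma BG_le_act_pow:
  assumes module: "BG_module G M add zero act" and w: "w \<in> carrier G" and v: "v \<in> M"
    and le: "BG_le add v (act w v)"
  shows "BG_le add v (act (w [^]\<^bsub>G\<^esub> (n::nat)) v)"
proof (induction n)
  case 0
  show ?case
    using module v act_one unfolding BG_le_def BG_module_def by fastforce
next
  case (Suc n)
  interpret group G using module unfolding BG_module_def by blast
  have wn: "w [^]\<^bsub>G\<^esub> n \<in> carrier G" using w by simp
  have "BG_le add (act w v) (act w (act (w [^]\<^bsub>G\<^esub> n) v))"
    using BG_le_act[OF module w v act_closed[OF module wn v] Suc.IH] .
  also have "act w (act (w [^]\<^bsub>G\<^esub> n) v) = act (w [^]\<^bsub>G\<^esub> Suc n) v"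
    using act_mult[OF module w wn v] nat_pow_Suc2[OF w] by (simp del: nat_pow_Suc)
  finally show ?case
    using BG_le_trans[OF module v act_closed[OF module w v] act_closed[OF module _ v] le] w
    by (simp del: nat_pow_Suc)
qed

lemma act_eq_if_BG_le_finite_order:
  assumes module: "BG_module G M add zero act" and w: "w \<in> carrier G" and v: "v \<in> M"
    and order: "(n::nat) > 0" "w [^]\<^bsub>G\<^esub> n = \<one>\<^bsub>G\<^esub>"
    and le: "BG_le add v (act w v)"
  shows "act w v = v"
proof -
  interpret group G using module unfolding BG_module_def by blast
  obtain m where n: "n = Suc m" using order(1) by (cases n) auto
  have wm: "w [^]\<^bsub>G\<^esub> m \<in> carrier G" using w by simp
  have "BG_le add (act w v) (act w (act (w [^]\<^bsub>G\<^esub> m) v))"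
    using BG_le_act[OF module w v act_closed[OF module wm v] BG_le_act_pow[OF module w v le]] .
  also have "act w (act (w [^]\<^bsub>G\<^esub> m) v) = v"
    using act_mult[OF module w wm v] act_one[OF module v] nat_pow_Suc2[OF w, of m] order n
    by (simp del: nat_pow_Suc)
  finally show ?thesis
    using BG_le_antisym[OF module act_closed[OF module w v] v] le by blast
qed

theorem lemma4p11:
  fixes G :: "('g, 'b) monoid_scheme" and M :: "'m set"
    and add :: "'m \<Rightarrow> 'm \<Rightarrow> 'm" and zero :: 'm and act :: "'g \<Rightarrow> 'm \<Rightarrow> 'm"
  assumes "torsion_group G"
    and "BG_module G M add zero act"
    and "BG_fin_gen G M add zero act"
    and "join_irreducible M add zero v"
    and "g \<in> carrier G" and "h \<in> carrier G"
    and "BG_le add (act g v) (act h v)"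
  shows "act g v = act h v"
proof -
  note module = assms(2) and g = assms(5) and h = assms(6)
  interpret group G using assms(1) unfolding torsion_group_def by blast
  have v: "v \<in> M" using assms(4) unfolding join_irreducible_def by blast
  define w where "w = inv\<^bsub>G\<^esub> g \<otimes>\<^bsub>G\<^esub> h"
  have w: "w \<in> carrier G" using g h by (simp add: w_def)
  have translate: "act (inv\<^bsub>G\<^esub> g) (act g v) = v" "act (inv\<^bsub>G\<^esub> g) (act h v) = act w v"
    using act_mult[OF module _ _ v, of "inv\<^bsub>G\<^esub> g", symmetric] act_one[OF module v] g h
    by (simp_all add: w_def)
  have "BG_le add v (act w v)"
    using BG_le_act[OF module inv_closed[OF g] act_closed[OF module g v] act_closed[OF module h v]
        assms(7)]
    by (simp only: translate)
  moreover obtain n :: nat where "n > 0" "w [^]\<^bsub>G\<^esub> n = \<one>\<^bsub>G\<^esub>"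
    using assms(1) w unfolding torsion_group_def by blast
  ultimately have "act w v = v" using act_eq_if_BG_le_finite_order[OF module w v] by blast
  moreover have "g \<otimes>\<^bsub>G\<^esub> w = h" using g h by (simp add: w_def m_assoc[symmetric])
  ultimately show ?thesis using act_mult[OF module g w v] by simp
qed

end
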